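(* Let $n$ and $k$ be integers with $n\ge 2$ and $2\le k\le 2^{n-1}+1$. Then $$v_2\big(s(2^n,2^n-k)\big)=\begin{cases} n-1-v_2(k) & \text{if } k \text{ is even},\\ 2n-2-v_2(k-1) & \text{if } k \text{ is odd}.\end{cases}$$
   Context: The (unsigned) Stirling numbers of the first kind $s(n,k)$ are defined by $x(x+1)\cdots(x+n-1)=\sum_{k=0}^n s(n,k)x^k$. $v_2$ denotes the $2$-adic valuation. *)

theory Defs
  imports "HOL-Combinatorics.Stirling" "HOL-Computational_Algebra.Primes"
begin

end

theory Submission
  imports Defs "HOL-Computational_Algebra.Polynomial"
begin

text \<open>Put N = 2^n = 2h. The rising factorial X(X+1)...(X+N-1) equals R(X+h), where
R(Y) = Y(Y-h) T(Y) and T(Y) = pair_prod h is the product of Y^2 - j^2 over 0 < j < h, an even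
polynomial. Expanding R(Y+h) to first order modulo h^2 ties s(N, N-k) to a single coefficient c of T:
it is c modulo h^2 for even k, and h(N-k) c modulo h^2 for odd k. Modulo h, pairing the factors of
j and h - j gives T_h = T_(h/2)^2 Y^2, hence by induction T(Y) = Y^(h-2) (Y^2-1)^(h/2); so c is
congruent to a signed binomial coefficient binom(2^(n-2), m) with k = 2m or k = 2m+1, whose 2-adic
valuation is n - 2 - v_2(m).\<close>

lemma dvd_diff_trans:
  fixes d a b c :: "'a::comm_ring_1"
  assumes "d dvd a - b" "d dvd b - c"
  shows "d dvd a - c"
proof -
  have "a - c = (a - b) + (b - c)" by simp
  then show ?thesis using assms by (metis dvd_add)
qed

lemma dvd_diff_mult:
  fixes d a b c e :: "'a::comm_ring_1"
  assumes "d dvd a - b" "d dvd c - e"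
  shows "d dvd a * c - b * e"
proof -
  have "a * c - b * e = (a - b) * c + b * (c - e)" by (simp add: algebra_simps)
  then show ?thesis using assms by simp
qed

lemma dvd_diff_prod:
  fixes d :: "'a::comm_ring_1"
  assumes "\<And>i. i \<in> A \<Longrightarrow> d dvd f i - g i"
  shows "d dvd prod f A - prod g A"
  using assms by (induction A rule: infinite_finite_induct) (auto intro: dvd_diff_mult)

lemma dvd_diff_square:
  fixes m a b :: "'a::comm_ring_1"
  assumes "m dvd a - b" "2 dvd m"
  shows "2 * m dvd a^2 - b^2"
proof -
  obtain r c where r: "a - b = m * r" and c: "m = 2 * c" using assms by (auto elim!: dvdE)
  have "a^2 - b^2 = (a - b) * (a - b) + 2 * b * (a - b)" by (simp add: algebra_simps power2_eq_square)
  also have "\<dots> = 2 * m * (c * r * r + b * r)" unfolding r by (simp add: c algebra_simps)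
  finally show ?thesis by simp
qed

lemma multiplicity_two_eqI:
  fixes s :: nat and u w :: int
  assumes s: "int s = 2^e * u + 2^f * w" and "odd u" "e < f"
  shows "multiplicity 2 s = e"
proof -
  define u' where "u' = u + 2^(f - e) * w"
  have s': "int s = 2^e * u'"
    using s \<open>e < f\<close> by (simp add: u'_def algebra_simps flip: power_add)
  have "odd u'" using \<open>odd u\<close> \<open>e < f\<close> by (simp add: u'_def)
  moreover have "0 \<le> (2::int)^e * u'" using s' by (metis of_nat_0_le_iff)
  ultimately have "u' > 0" by (auto simp: zero_le_mult_iff zero_less_mult_iff le_less)
  then have "int s = int (2^e * nat u')" using s' by simp
  then have "s = 2^e * nat u'" by (simp only: of_nat_eq_iff)
  moreover have "odd (nat u')" using \<open>odd u'\<close> \<open>u' > 0\<close> by (simp add: even_nat_iff)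
  ultimately show ?thesis by (auto intro: multiplicity_decomposeI)
qed

lemma even_pow2_choose:
  assumes "0 < r" "r < 2^a"
  shows "even ((2::nat)^a choose r)"
proof (rule ccontr)
  assume "odd ((2::nat)^a choose r)"
  then have "coprime ((2::nat)^a) (2^a choose r)" by simp
  moreover have "(2::nat)^a dvd r * (2^a choose r)"
    by (simp add: times_binomial_minus1_eq[OF \<open>0 < r\<close>])
  ultimately have "(2::nat)^a dvd r" by (simp add: coprime_dvd_mult_left_iff)
  then show False using assms by (auto dest: dvd_imp_le)
qed

lemma odd_pow2_minus_1_choose: "r < 2^a \<Longrightarrow> odd ((2::nat)^a - 1 choose r)"
proof (induction r)
  case (Suc r)
  have "(2::nat)^a choose Suc r = (2^a - 1 choose r) + (2^a - 1 choose Suc r)"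
    using binomial_Suc_Suc[of "2^a - 1" r] by simp
  moreover have "even ((2::nat)^a choose Suc r)" using Suc.prems by (intro even_pow2_choose) auto
  ultimately show ?case using Suc by auto
qed simp

lemma multiplicity_pow2_choose:
  assumes "0 < m" "m \<le> 2^a"
  shows "multiplicity 2 m + multiplicity 2 ((2::nat)^a choose m) = a"
proof -
  have odd: "odd ((2::nat)^a - 1 choose (m - 1))"
    using assms by (intro odd_pow2_minus_1_choose) auto
  have "m * (2^a choose m) = 2^a * (2^a - 1 choose (m - 1))"
    by (rule times_binomial_minus1_eq[OF \<open>0 < m\<close>])
  moreover have "multiplicity 2 ((2::nat)^a - 1 choose (m - 1)) = 0"
    using odd by (simp add: not_dvd_imp_multiplicity_0)
  ultimately have "multiplicity 2 (m * (2^a choose m)) = a"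
    using odd_pos[OF odd] by (simp add: prime_elem_multiplicity_mult_distrib)
  then show ?thesis
    using assms by (simp add: prime_elem_multiplicity_mult_distrib)
qed

lemma pow2_choose_odd_part:
  assumes "0 < m" "m \<le> 2^a"
  obtains c where "(2::nat)^a choose m = 2^(a - multiplicity 2 m) * c" "odd c"
proof -
  have "(2::nat)^a choose m \<noteq> 0" using assms by simp
  moreover have "\<not> is_unit (2::nat)" by simp
  ultimately obtain c where "(2::nat)^a choose m = 2^multiplicity 2 (2^a choose m) * c" "\<not> 2 dvd c"
    by (rule multiplicity_decompose')
  moreover have "multiplicity 2 ((2::nat)^a choose m) = a - multiplicity 2 m"
    using multiplicity_pow2_choose[OF assms] by simp
  ultimately show ?thesis using that by simp
qed

lemma coeff_pochhammer_X: "coeff (pochhammer [:0,1:] n) k = int (stirling n k)"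
proof -
  have monom: "of_nat c * [:0,1:] ^ j = monom (int c) j" for c j
    by (simp add: monom_altdef of_nat_poly)
  have "coeff (pochhammer [:0,1:] n) k = (\<Sum>j\<le>n. coeff (monom (int (stirling n j)) j) k)"
    by (simp only: stirling_pochhammer[symmetric] coeff_sum monom)
  also have "\<dots> = int (stirling n k)" by (cases "k \<le> n") simp_all
  finally show ?thesis .
qed

definition pair_prod :: "nat \<Rightarrow> int poly" where
  "pair_prod h = (\<Prod>j\<in>{1..<h}. [:- int (j^2), 0, 1:])"

lemma pochhammer_X_double:
  assumes "0 < h"
  shows "pochhammer [:0,1:] (2*h) = pcompose ([:0, - int h, 1:] * pair_prod h) [:int h, 1:]"
proof -
  let ?g = "\<lambda>i::nat. [:int i, 1:] :: int poly"
  have "pochhammer [:0,1:] (2*h) = (\<Prod>i\<in>{0..<2*h}. ?g i)"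
    by (simp add: pochhammer_prod of_nat_poly)
  also have "\<dots> = (\<Prod>i\<in>{0..<1}. ?g i) * (\<Prod>i\<in>{1..<2*h}. ?g i)"
    by (rule prod.atLeastLessThan_concat[symmetric]) (use assms in auto)
  also have "(\<Prod>i\<in>{1..<2*h}. ?g i) = (\<Prod>i\<in>{1..<h}. ?g i) * (\<Prod>i\<in>{h..<2*h}. ?g i)"
    by (rule prod.atLeastLessThan_concat[symmetric]) (use assms in auto)
  also have "(\<Prod>i\<in>{h..<2*h}. ?g i) = ?g h * (\<Prod>i\<in>{Suc h..<2*h}. ?g i)"
    using assms by (simp add: prod.atLeast_Suc_lessThan)
  also have "(\<Prod>i\<in>{1..<h}. ?g i) = (\<Prod>j\<in>{1..<h}. [:int h - int j, 1:])"
    by (rule prod.reindex_bij_witness[where i="\<lambda>j. h - j" and j="\<lambda>i. h - i"])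
      (auto simp: of_nat_diff)
  also have "(\<Prod>i\<in>{Suc h..<2*h}. ?g i) = (\<Prod>j\<in>{1..<h}. [:int h + int j, 1:])"
    by (rule prod.reindex_bij_witness[where i="\<lambda>j. h + j" and j="\<lambda>i. i - h"]) auto
  also have "(\<Prod>i\<in>{0..<1}. ?g i) = [:0,1:]" by simp
  also have "[:0,1:] * ((\<Prod>j\<in>{1..<h}. [:int h - int j, 1:]) *
      (?g h * (\<Prod>j\<in>{1..<h}. [:int h + int j, 1:]))) =
      [:0,1:] * [:int h, 1:] * ((\<Prod>j\<in>{1..<h}. [:int h - int j, 1:]) * (\<Prod>j\<in>{1..<h}. [:int h + int j, 1:]))"
    by (simp only: ac_simps)
  also have "\<dots> = pcompose ([:0, - int h, 1:] * pair_prod h) [:int h, 1:]"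
  proof -
    have factor: "pcompose [:- int (j^2), 0, 1:] [:int h, 1:] = [:int h - int j, 1:] * [:int h + int j, 1:]" for j
      by (simp add: pcompose_pCons algebra_simps power2_eq_square)
    have "pcompose [:0, - int h, 1:] [:int h, 1:] = [:0,1:] * [:int h, 1:]"
      by (simp add: pcompose_pCons algebra_simps)
    then show ?thesis
      by (simp only: pair_prod_def pcompose_mult pcompose_prod factor prod.distrib)
  qed
  finally show ?thesis .
qed

lemma coeff_pair_prod_odd:
  assumes "odd i"
  shows "coeff (pair_prod h) i = 0"
proof -
  have "pcompose [:c, 0, 1:] (monom (-1) 1) = [:c, 0, 1:]" for c :: int
    by (simp add: pcompose_pCons mult_monom monom_altdef one_pCons)
  then have "pcompose (pair_prod h) (monom (-1) 1) = pair_prod h"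
    by (simp add: pair_prod_def pcompose_prod)
  then have "coeff (pair_prod h) i = (-1)^i * coeff (pair_prod h) i"
    by (metis One_nat_def coeff_pcompose_monom_linear)
  then show ?thesis using assms by simp
qed

lemma pair_prod_double_cong:
  assumes "0 < h"
  shows "[:4 * int h:] dvd pair_prod (2*h) - (pair_prod h)^2 * [:- int (h^2), 0, 1:]"
proof -
  let ?f = "\<lambda>j::nat. [:- int (j^2), 0, 1:]"
  have "pair_prod (2*h) = pair_prod h * (\<Prod>j\<in>{h..<2*h}. ?f j)"
    unfolding pair_prod_def using assms by (simp add: prod.atLeastLessThan_concat)
  also have "(\<Prod>j\<in>{h..<2*h}. ?f j) = ?f h * (\<Prod>j\<in>{Suc h..<2*h}. ?f j)"
    using assms by (simp add: prod.atLeast_Suc_lessThan)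
  also have "(\<Prod>j\<in>{Suc h..<2*h}. ?f j) = (\<Prod>j\<in>{1..<h}. ?f (2*h - j))"
    by (rule prod.reindex_bij_witness[where i="\<lambda>j. 2*h - j" and j="\<lambda>j. 2*h - j"]) auto
  finally have split: "pair_prod (2*h) = pair_prod h * (?f h * (\<Prod>j\<in>{1..<h}. ?f (2*h - j)))" .
  have "[:4 * int h:] dvd (\<Prod>j\<in>{1..<h}. ?f (2*h - j)) - pair_prod h"
    unfolding pair_prod_def
  proof (rule dvd_diff_prod)
    fix j assume "j \<in> {1..<h}"
    then have "int ((2*h - j)^2) = (2 * int h - int j)^2" by (simp add: of_nat_diff)
    then have "?f (2*h - j) - ?f j = [:4 * int h:] * [:int j - int h:]"
      by (simp add: power2_eq_square algebra_simps)
    then show "[:4 * int h:] dvd ?f (2*h - j) - ?f j" by simp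
  qed
  then have "[:4 * int h:] dvd pair_prod h * (?f h * (\<Prod>j\<in>{1..<h}. ?f (2*h - j))) -
      pair_prod h * (?f h * pair_prod h)"
    by (intro dvd_diff_mult) simp_all
  moreover have "(pair_prod h)^2 * ?f h = pair_prod h * (?f h * pair_prod h)"
    by (simp only: power2_eq_square ac_simps)
  ultimately show ?thesis by (simp only: split)
qed

lemma pair_prod_pow2_cong:
  "[:2^(a+1):] dvd pair_prod (2^(a+1)) - monom 1 (2*(2^a - 1)) * [:-1, 0, 1:]^(2^a)"
proof (induction a)
  case 0
  have "{1..<2::nat} = {1}" by auto
  then show ?case by (simp add: pair_prod_def monom_0)
next
  case (Suc a)
  define h :: nat where "h = 2^(a+1)"
  define Z :: "int poly" where "Z = monom 1 (2*(2^a - 1)) * [:-1, 0, 1:]^(2^a)"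
  have double: "[:2 * int h:] = 2 * [:int h:]" by (simp add: numeral_poly)
  have "[:int h:] = 2 * [:2^a:]" by (simp add: h_def numeral_poly)
  then have "2 dvd [:int h:]" by (metis dvd_triv_left)
  then have "[:2 * int h:] dvd (pair_prod h)^2 - Z^2"
    unfolding double using Suc.IH by (intro dvd_diff_square) (simp_all add: h_def Z_def)
  moreover have "[:- int (h^2), 0, 1:] - [:0, 0, 1:] = [:2 * int h:] * [:- (2^a):]"
    by (simp add: h_def power2_eq_square)
  ultimately have "[:2 * int h:] dvd (pair_prod h)^2 * [:- int (h^2), 0, 1:] - Z^2 * [:0, 0, 1:]"
    by (intro dvd_diff_mult) simp_all
  moreover have "[:2 * int h:] dvd pair_prod (2*h) - (pair_prod h)^2 * [:- int (h^2), 0, 1:]"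
    using pair_prod_double_cong[of h] by (rule dvd_trans[rotated]) (simp_all add: h_def)
  ultimately have "[:2 * int h:] dvd pair_prod (2*h) - Z^2 * [:0, 0, 1:]"
    by (rule dvd_diff_trans[rotated])
  moreover have "Z^2 * [:0, 0, 1:] = monom 1 (2*(2^(a+1) - 1)) * [:-1, 0, 1:]^(2^(a+1))"
  proof -
    have "2 * (2 * (x - 1)) + 2 = 2 * (2 * x - 1)" if "1 \<le> x" for x :: nat
      using that by arith
    then have "2 * (2 * (2^a - 1)) + 2 = 2 * (2^(a+1) - 1::nat)" by simp
    moreover have "[:0, 0, 1:] = (monom 1 2 :: int poly)" by (simp add: monom_altdef power2_eq_square)
    ultimately show ?thesis
      unfolding Z_def power_mult_distrib monom_power mult_monom
      by (simp add: ac_simps mult_monom flip: power_mult)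
  qed
  ultimately show ?case by (simp add: h_def)
qed

lemma pcompose_shift_cong:
  fixes p :: "'a::idom poly"
  shows "[:c^2:] dvd pcompose p [:c, 1:] - (p + smult c (pderiv p))"
proof (induction p rule: pCons_induct)
  case (pCons a p)
  then obtain r where r: "pcompose p [:c, 1:] = p + smult c (pderiv p) + [:c^2:] * r"
    by (metis dvdE diff_eq_eq add.commute)
  define X :: "'a poly" where "X = [:0, 1:]"
  have lin: "[:c, 1:] = [:c:] + X" "pCons a p = [:a:] + X * p" "pCons 0 (pderiv p) = X * pderiv p"
    "[:c^2:] = [:c:] * [:c:]" "smult c q = [:c:] * q" for q
    by (simp_all add: X_def power2_eq_square)
  have "pcompose (pCons a p) [:c, 1:] - (pCons a p + smult c (pderiv (pCons a p))) =
      [:a:] + [:c, 1:] * pcompose p [:c, 1:] - (pCons a p + smult c (p + pCons 0 (pderiv p)))"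
    by (simp add: pcompose_pCons pderiv_pCons)
  also have "\<dots> = [:c^2:] * (pderiv p + [:c, 1:] * r)"
    unfolding r unfolding lin by algebra
  finally show ?case by (rule dvdI)
qed simp

lemma coeff_pochhammer_X_double_cong:
  assumes "0 < h"
  defines "P \<equiv> pochhammer [:0,1:] (2*h)" and "T \<equiv> pair_prod h"
  shows "int h^2 dvd coeff P (2*t+2) - coeff T (2*t)"
    and "int h^2 dvd coeff P (2*t+1) - int h * (2 * int t + 1) * coeff T (2*t)"
proof -
  define R where "R = [:0, - int h, 1:] * T"
  have coeff_R: "coeff R (Suc k) = - int h * coeff T k + (case k of 0 \<Rightarrow> 0 | Suc k' \<Rightarrow> coeff T k')" for k
    by (cases k) (simp_all add: R_def)
  have T_odd: "coeff T (2*j+1) = 0" for j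
    unfolding T_def by (rule coeff_pair_prod_odd) simp
  have R_even: "coeff R (2*j+2) = coeff T (2*j)" for j
    using coeff_R[of "2*j+1"] T_odd[of j] by simp
  have R_odd: "coeff R (2*j+1) = - int h * coeff T (2*j)" for j
    using coeff_R[of "2*j"] T_odd[of "j - 1"] by (cases j) simp_all
  have taylor: "int h^2 dvd coeff P i - (coeff R i + int h * (int i + 1) * coeff R (Suc i))" for i
  proof -
    have "[:int h^2:] dvd P - (R + smult (int h) (pderiv R))"
      using pcompose_shift_cong[of "int h" R] pochhammer_X_double[OF assms(1)]
      by (simp add: P_def R_def T_def)
    then have "int h^2 dvd coeff P i - (coeff R i + int h * (of_nat (Suc i) * coeff R (Suc i)))"
      by (simp add: const_poly_dvd_iff coeff_pderiv)
    then show ?thesis by (simp add: mult.assoc add.commute)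
  qed
  have "coeff P (2*t+2) - coeff T (2*t) = coeff P (2*t+2) -
      (coeff R (2*t+2) + int h * (int (2*t+2) + 1) * coeff R (Suc (2*t+2))) -
      int h^2 * ((2 * int t + 3) * coeff T (2*t+2))"
    using R_even[of t] R_odd[of "t+1"] by (simp add: algebra_simps power2_eq_square)
  then show "int h^2 dvd coeff P (2*t+2) - coeff T (2*t)"
    by (simp only:) (intro dvd_diff taylor dvd_triv_left)
  show "int h^2 dvd coeff P (2*t+1) - int h * (2 * int t + 1) * coeff T (2*t)"
    using taylor[of "2*t+1"] R_even[of t] R_odd[of t]
    by (simp add: algebra_simps)
qed

lemma coeff_X2_minus_1_pow:
  assumes "i \<le> M"
  shows "coeff ([:-1, 0, 1:]^M) (2*i) = (-1)^(M - i) * int (M choose i)"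
proof -
  have "[:-1, 0, 1:] = (monom 1 2 + monom (-1) 0 :: int poly)"
    by (simp add: monom_altdef power2_eq_square monom_0)
  moreover have "of_nat (M choose k) * monom 1 2 ^ k * monom (-1) 0 ^ (M - k) =
      (monom (int (M choose k) * (-1)^(M - k)) (2*k) :: int poly)" for k
    by (simp add: monom_power mult_monom of_nat_poly ac_simps flip: monom_0)
  ultimately have "coeff ([:-1, 0, 1:]^M) (2*i) =
      (\<Sum>k\<le>M. coeff (monom (int (M choose k) * (-1)^(M - k)) (2*k)) (2*i))"
    by (simp only: binomial_ring coeff_sum atLeast0AtMost)
  also have "\<dots> = (\<Sum>k\<le>M. if k = i then int (M choose k) * (-1)^(M - k) else 0)"
    by (rule sum.cong) auto
  also have "\<dots> = (-1)^(M - i) * int (M choose i)" using assms by simp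
  finally show ?thesis .
qed

lemma coeff_monom_mult_X2_minus_1_pow:
  assumes "0 < m" "m \<le> M"
  shows "coeff (monom 1 (2*(M - 1)) * [:-1, 0, 1:]^M) (2*(2*M - m - 1)) = (-1)^m * int (M choose m)"
proof -
  have "2*(2*M - m - 1) = 2*(M - 1) + 2*(M - m)" using assms by simp
  then have "coeff (monom 1 (2*(M - 1)) * [:-1, 0, 1:]^M) (2*(2*M - m - 1)) =
      coeff ([:-1, 0, 1:]^M) (2*(M - m))"
    by (simp add: coeff_monom_mult)
  also have "\<dots> = (-1)^m * int (M choose (M - m))"
    using assms by (subst coeff_X2_minus_1_pow) simp_all
  also have "\<dots> = (-1)^m * int (M choose m)"
    using assms by (simp flip: binomial_symmetric)
  finally show ?thesis .
qed

lemma coeff_pair_prod_pow2_cong: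
  assumes "0 < m" "m \<le> 2^a"
  shows "2^(a+1) dvd coeff (pair_prod (2^(a+1))) (2*(2*2^a - m - 1)) - (-1)^m * int (2^a choose m)"
proof -
  have "2^(a+1) dvd coeff (pair_prod (2^(a+1))) i - coeff (monom 1 (2*(2^a - 1)) * [:-1, 0, 1:]^(2^a)) i" for i
    using pair_prod_pow2_cong[of a] by (simp only: const_poly_dvd_iff coeff_diff)
  from this[of "2*(2*2^a - m - 1)"] show ?thesis
    unfolding coeff_monom_mult_X2_minus_1_pow[OF assms] .
qed

lemma stirling_pow2_even_cong:
  assumes "0 < m" "m \<le> 2^a"
  shows "2^(a+1) dvd int (stirling (2^(a+2)) (2^(a+2) - 2*m)) - (-1)^m * int (2^a choose m)"
proof -
  define t where "t = 2*2^a - m - 1"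
  have idx: "2^(a+2) - 2*m = 2*t + 2" using assms by (simp add: t_def)
  have "int (2^(a+1))^2 dvd int (stirling (2^(a+2)) (2^(a+2) - 2*m)) - coeff (pair_prod (2^(a+1))) (2*t)"
    using coeff_pochhammer_X_double_cong(1)[of "2^(a+1)" t] unfolding idx
    by (simp add: coeff_pochhammer_X flip: power_Suc)
  then have "2^(a+1) dvd int (stirling (2^(a+2)) (2^(a+2) - 2*m)) - coeff (pair_prod (2^(a+1))) (2*t)"
    by (rule dvd_trans[rotated]) (simp add: power2_eq_square)
  then show ?thesis
    using coeff_pair_prod_pow2_cong[OF assms] unfolding t_def by (rule dvd_diff_trans)
qed

lemma stirling_pow2_odd_cong:
  assumes "0 < m" "m \<le> 2^a"
  shows "2^(2*a+2) dvd int (stirling (2^(a+2)) (2^(a+2) - (2*m+1))) -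
           2^(a+1) * int (2^(a+2) - (2*m+1)) * ((-1)^m * int (2^a choose m))"
proof -
  define t where "t = 2*2^a - m - 1"
  define T where "T = coeff (pair_prod (2^(a+1))) (2*t)"
  have idx: "2^(a+2) - (2*m+1) = 2*t + 1" using assms by (simp add: t_def)
  have h2: "(2::int)^(2*a+2) = int (2^(a+1))^2" by (simp flip: power_mult power_add)
  have "2^(2*a+2) dvd int (stirling (2^(a+2)) (2^(a+2) - (2*m+1))) - 2^(a+1) * (2 * int t + 1) * T"
    using coeff_pochhammer_X_double_cong(2)[of "2^(a+1)" t] unfolding idx h2 T_def
    by (simp add: coeff_pochhammer_X flip: power_Suc)
  moreover have "2^(2*a+2) dvd
      2^(a+1) * (2 * int t + 1) * T - 2^(a+1) * int (2*t + 1) * ((-1)^m * int (2^a choose m))"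
  proof -
    have "2^(a+1) * 2^(a+1) dvd 2^(a+1) * (2 * int t + 1) * (T - (-1)^m * int (2^a choose m))"
      using coeff_pair_prod_pow2_cong[OF assms] unfolding T_def t_def
      by (rule mult_dvd_mono[OF dvd_triv_left])
    moreover have "(2::int)^(2*a+2) = 2^(a+1) * 2^(a+1)" by (simp flip: power_add)
    ultimately show ?thesis by (simp add: right_diff_distrib add.commute)
  qed
  ultimately show ?thesis
    unfolding idx by (rule dvd_diff_trans)
qed

lemma multiplicity_stirling_pow2_even:
  assumes "0 < m" "m \<le> 2^a"
  shows "multiplicity 2 (stirling (2^(a+2)) (2^(a+2) - 2*m)) = a - multiplicity 2 m"
proof -
  obtain c where c: "(2::nat)^a choose m = 2^(a - multiplicity 2 m) * c" "odd c"
    using pow2_choose_odd_part[OF assms] .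
  obtain w where "int (stirling (2^(a+2)) (2^(a+2) - 2*m)) - (-1)^m * int (2^a choose m) = 2^(a+1) * w"
    using stirling_pow2_even_cong[OF assms] by (elim dvdE)
  then have "int (stirling (2^(a+2)) (2^(a+2) - 2*m)) = 2^(a - multiplicity 2 m) * ((-1)^m * int c) + 2^(a+1) * w"
    by (simp add: c(1) algebra_simps)
  then show ?thesis by (rule multiplicity_two_eqI) (simp_all add: c(2))
qed

lemma multiplicity_stirling_pow2_odd:
  assumes "0 < m" "m \<le> 2^a"
  shows "multiplicity 2 (stirling (2^(a+2)) (2^(a+2) - (2*m+1))) = 2*a + 1 - multiplicity 2 m"
proof -
  define v where "v = multiplicity 2 m"
  have "v \<le> a" using multiplicity_pow2_choose[OF assms] by (simp add: v_def)
  then have exp: "(2::int)^(a+1) * 2^(a - v) = 2^(2*a+1 - v)"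
    by (metis power_add add_Suc Suc_diff_le add_diff_assoc mult_2 Suc_eq_plus1)
  obtain c where c: "(2::nat)^a choose m = 2^(a - v) * c" "odd c"
    using pow2_choose_odd_part[OF assms] unfolding v_def .
  obtain w where "int (stirling (2^(a+2)) (2^(a+2) - (2*m+1))) -
      2^(a+1) * int (2^(a+2) - (2*m+1)) * ((-1)^m * int (2^a choose m)) = 2^(2*a+2) * w"
    using stirling_pow2_odd_cong[OF assms] by (elim dvdE)
  then have "int (stirling (2^(a+2)) (2^(a+2) - (2*m+1))) =
      2^(a+1) * 2^(a - v) * (int (2^(a+2) - (2*m+1)) * (-1)^m * int c) + 2^(2*a+2) * w"
    by (simp add: c(1) algebra_simps)
  then have eq: "int (stirling (2^(a+2)) (2^(a+2) - (2*m+1))) =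
      2^(2*a+1 - v) * (int (2^(a+2) - (2*m+1)) * (-1)^m * int c) + 2^(2*a+2) * w"
    unfolding exp .
  have "odd (2^(a+2) - (2*m+1))"
  proof -
    have "(1::nat) \<le> 2^a" "(2::nat)^(a+2) = 4 * 2^a" by simp_all
    then have "2*m + 1 < 2^(a+2)" using assms(2) by linarith
    then show ?thesis by simp
  qed
  with c(2) show ?thesis
    unfolding v_def[symmetric] by (intro multiplicity_two_eqI[OF eq]) simp_all
qed

theorem corollary1p3:
  fixes n k :: nat
  assumes "n \<ge> 2" and "2 \<le> k" and "k \<le> 2 ^ (n - 1) + 1"
  shows "multiplicity (2::nat) (stirling (2 ^ n) (2 ^ n - k)) =
           (if even k then n - 1 - multiplicity (2::nat) k
            else 2 * n - 2 - multiplicity (2::nat) (k - 1))"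
proof -
  define a where "a = n - 2"
  have n: "n = a + 2" using assms(1) by (simp add: a_def)
  show ?thesis
  proof (cases "even k")
    case True
    then obtain m where k: "k = 2*m" by blast
    have "0 < m" "m \<le> 2^a" using assms(2,3) by (auto simp: k n)
    then show ?thesis
      using multiplicity_stirling_pow2_even[of m a] by (simp add: k n multiplicity_times_same)
  next
    case False
    then obtain m where k: "k = 2*m + 1" by (rule oddE)
    have "0 < m" "m \<le> 2^a" using assms(2,3) by (auto simp: k n)
    then show ?thesis
      using multiplicity_stirling_pow2_odd[of m a] by (simp add: k n multiplicity_times_same)
  qed
qed

end
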